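(* For any integers $k\ge4$ and $L\ge1$ there exists $f_{k,L}\in\mathcal{NN}_{2,1}(3k2^k+3,L)$ such that $f_{k,L}([-1,1]^2)\subseteq[-1,1]$ and \[ |f_{k,L}(x,y)-xy|\le 2^{-2kL-1}\qquad\text{for all }x,y\in[-1,1]. \]
   Context: $\mathcal{NN}_{d,k}(W,L)$: set of maps $g:\mathbb{R}^d\to\mathbb{R}^k$ given by $g_0(x)=x$, $g_{\ell+1}(x)=\sigma(A_\ell g_\ell(x)+b_\ell)$ ($\ell=0,\dots,L-1$), $g(x)=A_Lg_L(x)+b_L$, with $A_\ell\in\mathbb{R}^{N_{\ell+1}\times N_\ell}$, $b_\ell\in\mathbb{R}^{N_{\ell+1}}$, $N_0=d$, $N_{L+1}=k$, $\max\{N_1,\dots,N_L\}\le W$, $\sigma(t)=\max\{t,0\}$ componentwise. *)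

theory Defs
  imports Complex_Main
begin

text \<open>Vectors in R^n are represented as functions nat => real, of which
only the entries with index < n matter. A network of depth L is given by widths N 0, ..., N (L+1),
weight matrices A l (of size N (l+1) x N l) and bias vectors b l, for l = 0..L.\<close>

fun nn_hidden :: "(nat \<Rightarrow> nat) \<Rightarrow> (nat \<Rightarrow> nat \<Rightarrow> nat \<Rightarrow> real) \<Rightarrow> (nat \<Rightarrow> nat \<Rightarrow> real)
                  \<Rightarrow> nat \<Rightarrow> (nat \<Rightarrow> real) \<Rightarrow> (nat \<Rightarrow> real)" where
  "nn_hidden N A b 0 x = (\<lambda>i. if i < N 0 then x i else 0)"
| "nn_hidden N A b (Suc l) x =
     (\<lambda>i. if i < N (Suc l)
          then max 0 ((\<Sum>j<N l. A l i j * nn_hidden N A b l x j) + b l i) else 0)"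

definition nn_eval :: "(nat \<Rightarrow> nat) \<Rightarrow> (nat \<Rightarrow> nat \<Rightarrow> nat \<Rightarrow> real) \<Rightarrow> (nat \<Rightarrow> nat \<Rightarrow> real)
                  \<Rightarrow> nat \<Rightarrow> (nat \<Rightarrow> real) \<Rightarrow> (nat \<Rightarrow> real)" where
  "nn_eval N A b L x =
     (\<lambda>i. if i < N (Suc L)
          then (\<Sum>j<N L. A L i j * nn_hidden N A b L x j) + b L i else 0)"

definition NN :: "nat \<Rightarrow> nat \<Rightarrow> nat \<Rightarrow> nat \<Rightarrow> ((nat \<Rightarrow> real) \<Rightarrow> (nat \<Rightarrow> real)) set" where
  "NN d k W L = {g. \<exists>N A b. N 0 = d \<and> N (Suc L) = k \<and> (\<forall>l\<in>{1..L}. N l \<le> W) \<and>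
                         g = nn_eval N A b L}"

definition vec2 :: "real \<Rightarrow> real \<Rightarrow> nat \<Rightarrow> real" where
  "vec2 x y = (\<lambda>i. if i = 0 then x else if i = 1 then y else 0)"

end

theory Submission
  imports Defs
begin

text \<open>With t = (x+y+2)/4 and r = (x-y+2)/4 in [0,1] one has xy = 4 (q r - q t) for
q u = u - u^2. On [0,1], q equals its piecewise linear interpolant on the grid of mesh 1/n plus
q (S u) / n^2, where the sawtooth S maps every grid cell affinely onto [0,1]. Iterating this L times
writes q as a sum of L piecewise linear functions up to an error in [0, 1/(4 n^(2L))]. The sawtooth
and the interpolant are linear combinations of the hinges max 0 (u - i/n), i < n, so L hidden ReLU
layers of width 2n+2 (the hinges at the current iterates of t and r, and two running sums)
approximate xy within 1/n^(2L), which is at most 2^(-2kL-2) for n = 2^(k+1). Dividing the output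
by 1 + 1/n^(2L) puts it into [-1,1] and at most doubles the error.\<close>

definition quad :: "real \<Rightarrow> real" where
  "quad u = u - u\<^sup>2"

definition hinge :: "nat \<Rightarrow> nat \<Rightarrow> real \<Rightarrow> real" where
  "hinge n i u = max 0 (u - real i / real n)"

definition sawtooth_coeff :: "nat \<Rightarrow> nat \<Rightarrow> real" where
  "sawtooth_coeff n i = (if i = 0 then real n else 2 * real n * (-1) ^ i)"

definition interp_coeff :: "nat \<Rightarrow> nat \<Rightarrow> real" where
  "interp_coeff n i = (if i = 0 then 1 - 1 / real n else - 2 / real n)"

text \<open>On \<open>[0,1]\<close>, \<open>sawtooth n\<close> maps each cell \<open>[j/n, (j+1)/n]\<close> affinely onto \<open>[0,1]\<close>
(increasing for even \<open>j\<close>, decreasing for odd \<open>j\<close>), and \<open>quad_interp n\<close> is the piecewise linear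
interpolant of \<open>quad\<close> at the nodes \<open>j/n\<close>.\<close>

definition sawtooth :: "nat \<Rightarrow> real \<Rightarrow> real" where
  "sawtooth n u = (\<Sum>i<n. sawtooth_coeff n i * hinge n i u)"

definition quad_interp :: "nat \<Rightarrow> real \<Rightarrow> real" where
  "quad_interp n u = (\<Sum>i<n. interp_coeff n i * hinge n i u)"

lemma grid_cell_exists:
  assumes "n > 0" "u \<in> {0..1}"
  obtains j where "j < n" "real j / real n \<le> u" "u \<le> (real j + 1) / real n"
proof (cases "u = 1")
  case True
  then show ?thesis using assms by (intro that[of "n - 1"]) (auto simp: of_nat_diff)
next
  case False
  define j where "j = nat \<lfloor>real n * u\<rfloor>"
  have j: "real j = of_int \<lfloor>real n * u\<rfloor>" using assms by (simp add: j_def)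
  have "real n * u < real n" using False assms by simp
  then have "j < n" using j by linarith
  moreover have "real j / real n \<le> u" "u \<le> (real j + 1) / real n"
    using j assms(1) by (simp_all add: field_simps) linarith+
  ultimately show ?thesis by (rule that)
qed

lemma sum_hinges_on_cell:
  assumes "n > 0" "j < n" "real j / real n \<le> u" "u \<le> (real j + 1) / real n"
  shows "(\<Sum>i<n. c i * hinge n i u) = (\<Sum>i<Suc j. c i * (u - real i / real n))"
proof -
  have "(\<Sum>i<n. c i * hinge n i u) = (\<Sum>i<n. if i < Suc j then c i * (u - real i / real n) else 0)"
  proof (rule sum.cong[OF refl])
    fix i
    have "real i / real n \<le> real j / real n" if "i \<le> j"
      using that assms(1) by (simp add: divide_right_mono)
    moreover have "(real j + 1) / real n \<le> real i / real n" if "j < i"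
      using that assms(1) by (simp add: divide_right_mono)
    ultimately show "c i * hinge n i u = (if i < Suc j then c i * (u - real i / real n) else 0)"
      using assms(3,4) by (auto simp: hinge_def)
  qed
  also have "\<dots> = (\<Sum>i\<in>{i\<in>{..<n}. i < Suc j}. c i * (u - real i / real n))"
    by (rule sum.inter_filter[symmetric]) simp
  also have "{i\<in>{..<n}. i < Suc j} = {..<Suc j}" using assms(2) by auto
  finally show ?thesis .
qed

lemma sum_sawtooth_coeff:
  assumes "n > 0"
  shows "(\<Sum>i<Suc j. sawtooth_coeff n i * (u - real i / real n))
           = (if even j then real n * u - real j else 1 - (real n * u - real j))"
proof (induction j)
  case (Suc j)
  show ?case
    unfolding sum.lessThan_Suc[of _ "Suc j"] Suc.IH
    using assms by (auto simp: sawtooth_coeff_def field_simps)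
qed (simp add: sawtooth_coeff_def)

lemma sum_interp_coeff:
  assumes "n > 0"
  shows "(\<Sum>i<Suc j. interp_coeff n i * (u - real i / real n))
           = u - u / n - 2 * j * u / n + real j * (real j + 1) / (real n)\<^sup>2"
proof (induction j)
  case (Suc j)
  show ?case
    unfolding sum.lessThan_Suc[of _ "Suc j"] Suc.IH
    using assms by (simp add: interp_coeff_def field_simps power2_eq_square)
qed (use assms in \<open>simp add: interp_coeff_def field_simps\<close>)

lemma sawtooth_in_unit:
  assumes "n > 0" "u \<in> {0..1}"
  shows "sawtooth n u \<in> {0..1}"
proof -
  obtain j where j: "j < n" "real j / real n \<le> u" "u \<le> (real j + 1) / real n"
    using grid_cell_exists[OF assms] .
  have "0 \<le> real n * u - real j" "real n * u - real j \<le> 1"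
    using j(2,3) assms(1) by (simp_all add: field_simps)
  then show ?thesis
    unfolding sawtooth_def sum_hinges_on_cell[OF assms(1) j] sum_sawtooth_coeff[OF assms(1)] by auto
qed

lemma quad_eq_interp_plus_sawtooth:
  assumes "n > 0" "u \<in> {0..1}"
  shows "quad u = quad_interp n u + quad (sawtooth n u) / (real n)\<^sup>2"
proof -
  obtain j where j: "j < n" "real j / real n \<le> u" "u \<le> (real j + 1) / real n"
    using grid_cell_exists[OF assms] .
  define w where "w = real n * u - real j"
  have sawtooth: "quad (sawtooth n u) = w - w\<^sup>2"
    unfolding sawtooth_def sum_hinges_on_cell[OF assms(1) j] sum_sawtooth_coeff[OF assms(1)] w_def
    by (simp add: quad_def power2_eq_square algebra_simps)
  have u: "u = (real j + w) / real n" using assms(1) by (simp add: w_def field_simps)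
  have interp: "quad u - quad_interp n u = (w - w\<^sup>2) / (real n)\<^sup>2"
    unfolding quad_interp_def sum_hinges_on_cell[OF assms(1) j] sum_interp_coeff[OF assms(1)]
      quad_def
    using assms(1) by (simp add: u field_simps power2_eq_square)
  show ?thesis using sawtooth interp by simp
qed

lemma quad_bounds:
  assumes "v \<in> {0..1}"
  shows "0 \<le> quad v \<and> quad v \<le> 1/4"
proof -
  have "v * v \<le> v" using assms by (simp add: mult_left_le)
  moreover have "0 \<le> (v - 1/2)\<^sup>2" by simp
  ultimately show ?thesis by (simp add: quad_def power2_eq_square algebra_simps)
qed

lemma quad_polarization: "x * y = 4 * (quad ((x - y + 2) / 4) - quad ((x + y + 2) / 4))"
  by (simp add: quad_def power2_eq_square field_simps)

lemma sawtooth_iterate_in_unit: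
  assumes "n > 0" "u \<in> {0..1}"
  shows "(sawtooth n ^^ m) u \<in> {0..1}"
  using assms(2) sawtooth_in_unit[OF assms(1)] by (induction m) simp_all

definition quad_approx :: "nat \<Rightarrow> nat \<Rightarrow> real \<Rightarrow> real" where
  "quad_approx n m u = (\<Sum>l<m. quad_interp n ((sawtooth n ^^ l) u) / real n ^ (2 * l))"

lemma quad_approx_0 [simp]: "quad_approx n 0 u = 0"
  by (simp add: quad_approx_def)

lemma quad_approx_Suc:
  "quad_approx n (Suc m) u
     = quad_approx n m u + quad_interp n ((sawtooth n ^^ m) u) / real n ^ (2 * m)"
  by (simp add: quad_approx_def)

lemma quad_approx_error:
  assumes "n > 0" "u \<in> {0..1}"
  shows "quad_approx n m u = quad u - quad ((sawtooth n ^^ m) u) / real n ^ (2 * m)"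
proof (induction m)
  case 0
  then show ?case by simp
next
  case (Suc m)
  let ?v = "(sawtooth n ^^ m) u"
  have "quad_approx n (Suc m) u = quad u - (quad ?v - quad_interp n ?v) / real n ^ (2 * m)"
    using Suc.IH by (simp add: quad_approx_Suc diff_divide_distrib)
  also have "quad ?v - quad_interp n ?v = quad (sawtooth n ?v) / (real n)\<^sup>2"
    using quad_eq_interp_plus_sawtooth[OF assms(1) sawtooth_iterate_in_unit[OF assms]] by simp
  also have "quad (sawtooth n ?v) / (real n)\<^sup>2 / real n ^ (2 * m)
      = quad ((sawtooth n ^^ Suc m) u) / real n ^ (2 * Suc m)"
    by (simp add: divide_divide_eq_left power_add[symmetric])
  finally show ?case .
qed

lemma quad_approx_lower_bound:
  assumes "n > 0" "u \<in> {0..1}"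
  shows "- 1/4 \<le> quad_approx n m u"
proof -
  let ?e = "quad ((sawtooth n ^^ m) u)"
  have "0 \<le> ?e" "?e \<le> 1/4"
    using quad_bounds[OF sawtooth_iterate_in_unit[OF assms]] by auto
  moreover have "1 \<le> real n ^ (2 * m)" using assms(1) by (simp add: one_le_power)
  ultimately have "?e / real n ^ (2 * m) \<le> ?e"
    using assms(1) divide_left_mono[of 1 "real n ^ (2 * m)" ?e] by simp
  with \<open>?e \<le> 1/4\<close> have "?e / real n ^ (2 * m) \<le> 1/4" by linarith
  then show ?thesis
    using quad_approx_error[OF assms, of m] quad_bounds[OF assms(2)] by linarith
qed

lemma sum_lessThan_add:
  fixes f :: "nat \<Rightarrow> 'a::comm_monoid_add"
  shows "(\<Sum>j<a + b. f j) = (\<Sum>j<a. f j) + (\<Sum>j<b. f (a + j))"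
  by (induction b) (simp_all add: add.assoc)

lemma sum_lessThan_two_blocks_plus_two:
  fixes f :: "nat \<Rightarrow> 'a::comm_monoid_add"
  shows "(\<Sum>j<2 * n + 2. f j)
           = (\<Sum>j<n. f j) + (\<Sum>j<n. f (n + j)) + f (2 * n) + f (2 * n + 1)"
  using sum_lessThan_add[of f n n] by (simp add: mult_2 add.assoc)

definition product_net_width :: "nat \<Rightarrow> nat \<Rightarrow> nat \<Rightarrow> nat" where
  "product_net_width n L l = (if l = 0 then 2 else if l \<le> L then 2 * n + 2 else 1)"

definition product_net_weight :: "nat \<Rightarrow> nat \<Rightarrow> real \<Rightarrow> nat \<Rightarrow> nat \<Rightarrow> nat \<Rightarrow> real" where
  "product_net_weight n L c l i j =
    (if l = 0 then
       (if i < n then (if j = 0 \<or> j = 1 then 1/4 else 0)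
        else if i < 2 * n then (if j = 0 then 1/4 else if j = 1 then - 1/4 else 0) else 0)
     else if l < L then
       (if i < n then (if j < n then sawtooth_coeff n j else 0)
        else if i < 2 * n then (if n \<le> j \<and> j < 2 * n then sawtooth_coeff n (j - n) else 0)
        else if i = 2 * n then
          (if j < n then interp_coeff n j / real n ^ (2 * (l - 1)) else if j = 2 * n then 1 else 0)
        else if i = 2 * n + 1 then
          (if n \<le> j \<and> j < 2 * n then interp_coeff n (j - n) / real n ^ (2 * (l - 1))
           else if j = 2 * n + 1 then 1 else 0)
        else 0)
     else 4 * c * (if j < n then - interp_coeff n j / real n ^ (2 * (l - 1))
                   else if j < 2 * n then interp_coeff n (j - n) / real n ^ (2 * (l - 1))
                   else if j = 2 * n then - 1 else if j = 2 * n + 1 then 1 else 0))"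

definition product_net_bias :: "nat \<Rightarrow> nat \<Rightarrow> nat \<Rightarrow> nat \<Rightarrow> real" where
  "product_net_bias n L l i =
    (if l = 0 then
       (if i < n then 1/2 - real i / real n
        else if i < 2 * n then 1/2 - real (i - n) / real n else 1)
     else if l < L then
       (if i < n then - real i / real n else if i < 2 * n then - real (i - n) / real n else 0)
     else 0)"

abbreviation product_net_layer :: "nat \<Rightarrow> nat \<Rightarrow> real \<Rightarrow> nat \<Rightarrow> (nat \<Rightarrow> real) \<Rightarrow> nat \<Rightarrow> real" where
  "product_net_layer n L c \<equiv>
     nn_hidden (product_net_width n L) (product_net_weight n L c) (product_net_bias n L)"

abbreviation product_net :: "nat \<Rightarrow> nat \<Rightarrow> real \<Rightarrow> (nat \<Rightarrow> real) \<Rightarrow> nat \<Rightarrow> real" where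
  "product_net n L c \<equiv>
     nn_eval (product_net_width n L) (product_net_weight n L c) (product_net_bias n L) L"

text \<open>The units of hidden layer \<open>m + 1\<close> when the network is fed \<open>(x, y)\<close>: the hinges of the
\<open>m\<close>-th sawtooth iterates of \<open>t = (x+y+2)/4\<close> and \<open>r = (x-y+2)/4\<close>, followed by the running sums
\<open>quad_approx n m\<close> at \<open>t\<close> and \<open>r\<close>, shifted by \<open>1\<close> so that the ReLU acts on them as the identity.\<close>

definition product_net_units :: "nat \<Rightarrow> nat \<Rightarrow> real \<Rightarrow> real \<Rightarrow> nat \<Rightarrow> real" where
  "product_net_units n m t r i =
    (if i < n then hinge n i ((sawtooth n ^^ m) t)
     else if i < 2 * n then hinge n (i - n) ((sawtooth n ^^ m) r)
     else if i = 2 * n then quad_approx n m t + 1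
     else if i = 2 * n + 1 then quad_approx n m r + 1 else 0)"

lemma product_net_hidden_first:
  assumes "L \<ge> 1"
  shows "product_net_layer n L c 1 (vec2 x y)
           = product_net_units n 0 ((x + y + 2) / 4) ((x - y + 2) / 4)"
proof
  fix i
  show "product_net_layer n L c 1 (vec2 x y) i
          = product_net_units n 0 ((x + y + 2) / 4) ((x - y + 2) / 4) i"
    using assms
    by (simp add: product_net_width_def product_net_weight_def product_net_bias_def
        product_net_units_def vec2_def hinge_def numeral_2_eq_2 algebra_simps)
      (auto intro!: arg_cong[where f = "max (0::real)"] simp: field_simps)
qed

lemma product_net_hidden_step:
  assumes "n > 0" "Suc m < L" "t \<in> {0..1}" "r \<in> {0..1}"
    and prev: "product_net_layer n L c (Suc m) v = product_net_units n m t r"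
  shows "product_net_layer n L c (Suc (Suc m)) v = product_net_units n (Suc m) t r"
proof
  fix i
  let ?S = "\<Sum>j<2 * n + 2. product_net_weight n L c (Suc m) i j * product_net_units n m t r j"
  have layer: "product_net_layer n L c (Suc (Suc m)) v i
      = (if i < 2 * n + 2 then max 0 (?S + product_net_bias n L (Suc m) i) else 0)"
    using prev assms(2) by (simp add: product_net_width_def)
  have "i < n \<Longrightarrow> ?S = sawtooth n ((sawtooth n ^^ m) t)"
    "\<not> i < n \<Longrightarrow> i < 2 * n \<Longrightarrow> ?S = sawtooth n ((sawtooth n ^^ m) r)"
    "i = 2 * n \<Longrightarrow> ?S = quad_approx n (Suc m) t + 1"
    "i = 2 * n + 1 \<Longrightarrow> ?S = quad_approx n (Suc m) r + 1"
    unfolding sum_lessThan_two_blocks_plus_two using assms(2)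
    by (simp_all add: product_net_weight_def product_net_units_def sawtooth_def quad_interp_def
        quad_approx_Suc sum_divide_distrib cong: sum.cong_simp)
  moreover have "0 \<le> quad_approx n (Suc m) t + 1" "0 \<le> quad_approx n (Suc m) r + 1"
    using quad_approx_lower_bound[OF assms(1,3), of "Suc m"]
      quad_approx_lower_bound[OF assms(1,4), of "Suc m"] by linarith+
  ultimately show "product_net_layer n L c (Suc (Suc m)) v i = product_net_units n (Suc m) t r i"
    unfolding layer using assms(2)
    by (auto simp: product_net_units_def product_net_bias_def hinge_def
        intro!: arg_cong[where f = "max (0::real)"];
        simp add: field_simps)
qed

lemma product_net_hidden:
  assumes "n > 0" "x \<in> {-1..1}" "y \<in> {-1..1}" "Suc m \<le> L"
  shows "product_net_layer n L c (Suc m) (vec2 x y)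
           = product_net_units n m ((x + y + 2) / 4) ((x - y + 2) / 4)"
  using assms(4)
proof (induction m)
  case 0
  then show ?case using product_net_hidden_first by simp
next
  case (Suc m)
  have "(x + y + 2) / 4 \<in> {0..1}" "(x - y + 2) / 4 \<in> {0..1}" using assms(2,3) by auto
  with Suc show ?case using product_net_hidden_step[OF assms(1)] by simp
qed

lemma product_net_eval:
  assumes "n > 0" "x \<in> {-1..1}" "y \<in> {-1..1}" "L = Suc m"
  shows "product_net n L c (vec2 x y) 0
           = 4 * c * (quad_approx n L ((x - y + 2) / 4) - quad_approx n L ((x + y + 2) / 4))"
proof -
  define t where "t = (x + y + 2) / 4"
  define r where "r = (x - y + 2) / 4"
  let ?w = "product_net_weight n L c L 0" and ?h = "product_net_units n m t r"
  have "product_net n L c (vec2 x y) 0 = (\<Sum>j<2 * n + 2. ?w j * ?h j)"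
    using product_net_hidden[OF assms(1-3), of m L c] assms(4)
    by (simp add: nn_eval_def product_net_width_def product_net_bias_def t_def r_def)
  also have "\<dots> = 4 * c * (quad_approx n L r - quad_approx n L t)"
  proof -
    have "(\<Sum>j<n. ?w j * ?h j)
         = 4 * c * - (quad_interp n ((sawtooth n ^^ m) t) / real n ^ (2 * m))"
      "(\<Sum>j<n. ?w (n + j) * ?h (n + j))
         = 4 * c * (quad_interp n ((sawtooth n ^^ m) r) / real n ^ (2 * m))"
      using assms(4)
      by (simp_all add: product_net_weight_def product_net_units_def quad_interp_def
          sum_distrib_left sum_divide_distrib mult.assoc flip: sum_negf cong: sum.cong_simp)
    moreover have "?w (2 * n) * ?h (2 * n) = 4 * c * - (quad_approx n m t + 1)"
      "?w (2 * n + 1) * ?h (2 * n + 1) = 4 * c * (quad_approx n m r + 1)"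
      using assms(4) by (simp_all add: product_net_weight_def product_net_units_def algebra_simps)
    ultimately show ?thesis
      unfolding sum_lessThan_two_blocks_plus_two using assms(4)
      by (simp add: quad_approx_Suc algebra_simps)
  qed
  finally show ?thesis by (simp add: t_def r_def)
qed

lemma product_network:
  assumes "n > 0" "L \<ge> 1"
  shows "\<exists>f \<in> NN 2 1 (2 * n + 2) L. \<forall>x \<in> {-1..1}. \<forall>y \<in> {-1..1}.
           \<bar>f (vec2 x y) 0 - c * (x * y)\<bar> \<le> \<bar>c\<bar> / real n ^ (2 * L)"
proof
  obtain m where L: "L = Suc m" using assms(2) by (cases L) auto
  let ?f = "product_net n L c"
  show "?f \<in> NN 2 1 (2 * n + 2) L"
    unfolding NN_def
  proof (intro CollectI exI conjI)
    show "product_net_width n L 0 = 2" "product_net_width n L (Suc L) = 1"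
      "\<forall>l\<in>{1..L}. product_net_width n L l \<le> 2 * n + 2"
      by (simp_all add: product_net_width_def)
  qed (rule refl)
  show "\<forall>x \<in> {-1..1}. \<forall>y \<in> {-1..1}. \<bar>?f (vec2 x y) 0 - c * (x * y)\<bar> \<le> \<bar>c\<bar> / real n ^ (2 * L)"
  proof (intro ballI)
    fix x y :: real
    assume xy: "x \<in> {-1..1}" "y \<in> {-1..1}"
    define t where "t = (x + y + 2) / 4"
    define r where "r = (x - y + 2) / 4"
    have tr: "t \<in> {0..1}" "r \<in> {0..1}" using xy by (auto simp: t_def r_def)
    let ?e = "\<lambda>u. quad ((sawtooth n ^^ L) u)"
    have eval: "?f (vec2 x y) 0 = 4 * c * (quad_approx n L r - quad_approx n L t)"
      using product_net_eval[OF assms(1) xy L] by (simp add: t_def r_def)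
    have polar: "x * y = 4 * (quad r - quad t)"
      unfolding t_def r_def by (rule quad_polarization)
    have "?f (vec2 x y) 0 - c * (x * y) = c * (4 * (?e t - ?e r)) / real n ^ (2 * L)"
      unfolding eval polar quad_approx_error[OF assms(1) tr(1)] quad_approx_error[OF assms(1) tr(2)]
      by (simp add: algebra_simps diff_divide_distrib)
    moreover have "\<bar>4 * (?e t - ?e r)\<bar> \<le> 1"
      using quad_bounds[OF sawtooth_iterate_in_unit[OF assms(1) tr(1)], of L]
        quad_bounds[OF sawtooth_iterate_in_unit[OF assms(1) tr(2)], of L] by auto
    ultimately show "\<bar>?f (vec2 x y) 0 - c * (x * y)\<bar> \<le> \<bar>c\<bar> / real n ^ (2 * L)"
      using assms(1) by (simp add: abs_mult divide_right_mono mult_left_le)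
  qed
qed

lemma NN_mono: "W \<le> W' \<Longrightarrow> NN d k W L \<subseteq> NN d k W' L"
  unfolding NN_def by fastforce

lemma rescaled_approx_bounds:
  fixes p z d :: real
  assumes "\<bar>p\<bar> \<le> 1" "d > 0" "\<bar>z - p / (1 + d)\<bar> \<le> d / (1 + d)"
  shows "z \<in> {-1..1} \<and> \<bar>z - p\<bar> \<le> 2 * d"
proof
  have "\<bar>p / (1 + d)\<bar> \<le> 1 / (1 + d)"
    using assms(1,2) by (simp add: abs_div divide_right_mono)
  then have "\<bar>z\<bar> \<le> d / (1 + d) + 1 / (1 + d)" using assms(3) by linarith
  also have "\<dots> = 1" using assms(2) by (simp add: field_simps)
  finally show "z \<in> {-1..1}" by auto
  have "\<bar>p - p / (1 + d)\<bar> = \<bar>p\<bar> * (d / (1 + d))"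
    using assms(2) by (simp add: field_simps abs_mult)
  also have "\<dots> \<le> d / (1 + d)" by (rule mult_left_le_one_le) (use assms(1,2) in auto)
  finally have "\<bar>z - p\<bar> \<le> 2 * (d / (1 + d))" using assms(3) by linarith
  also have "\<dots> \<le> 2 * d" using assms(2) by (simp add: field_simps)
  finally show "\<bar>z - p\<bar> \<le> 2 * d" .
qed

lemma bounded_product_network:
  assumes "n > 0" "L \<ge> 1"
  shows "\<exists>f \<in> NN 2 1 (2 * n + 2) L. \<forall>x \<in> {-1..1}. \<forall>y \<in> {-1..1}.
           f (vec2 x y) 0 \<in> {-1..1} \<and> \<bar>f (vec2 x y) 0 - x * y\<bar> \<le> 2 / real n ^ (2 * L)"
proof -
  define d where "d = 1 / real n ^ (2 * L)"
  have d: "d > 0" using assms(1) by (simp add: d_def)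
  obtain f where f: "f \<in> NN 2 1 (2 * n + 2) L"
    and err: "\<forall>x \<in> {-1..1}. \<forall>y \<in> {-1..1}.
                \<bar>f (vec2 x y) 0 - 1 / (1 + d) * (x * y)\<bar> \<le> \<bar>1 / (1 + d)\<bar> / real n ^ (2 * L)"
    using product_network[OF assms, of "1 / (1 + d)"] by blast
  have "f (vec2 x y) 0 \<in> {-1..1} \<and> \<bar>f (vec2 x y) 0 - x * y\<bar> \<le> 2 * d"
    if xy: "x \<in> {-1..1}" "y \<in> {-1..1}" for x y
  proof (rule rescaled_approx_bounds[OF _ d])
    show "\<bar>x * y\<bar> \<le> 1" using xy by (auto simp: abs_mult abs_le_iff intro!: mult_le_one)
    show "\<bar>f (vec2 x y) 0 - x * y / (1 + d)\<bar> \<le> d / (1 + d)"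
    proof -
      have "\<bar>1 / (1 + d)\<bar> / real n ^ (2 * L) = d / (1 + d)" using d by (simp add: d_def)
      then show ?thesis using err xy by simp
    qed
  qed
  then show ?thesis using f by (intro bexI[of _ f]) (simp_all add: d_def)
qed

theorem mainTheorem9:
  fixes k L :: nat
  assumes "k \<ge> 4" and "L \<ge> 1"
  shows "\<exists>f \<in> NN 2 1 (3 * k * 2 ^ k + 3) L.
           (\<forall>x \<in> {-1..1}. \<forall>y \<in> {-1..1}.
              f (vec2 x y) 0 \<in> {-1..1} \<and>
              \<bar>f (vec2 x y) 0 - x * y\<bar> \<le> (1/2::real) ^ (2 * k * L + 1))"
proof -
  define n :: nat where "n = 2 ^ (k + 1)"
  obtain f where f: "f \<in> NN 2 1 (2 * n + 2) L"
    and approx: "\<forall>x \<in> {-1..1}. \<forall>y \<in> {-1..1}.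
       f (vec2 x y) 0 \<in> {-1..1} \<and> \<bar>f (vec2 x y) 0 - x * y\<bar> \<le> 2 / real n ^ (2 * L)"
    using bounded_product_network[of n L] assms(2) by (auto simp: n_def)
  have "2 * n + 2 \<le> 4 * 2 ^ k + 3" by (simp add: n_def)
  also have "\<dots> \<le> 3 * k * 2 ^ k + 3" using assms(1) mult_right_mono[of 4 "3 * k" "2 ^ k"] by simp
  finally have "2 * n + 2 \<le> 3 * k * 2 ^ k + 3" .
  then have "f \<in> NN 2 1 (3 * k * 2 ^ k + 3) L" using f NN_mono by blast
  moreover have "2 / real n ^ (2 * L) \<le> (1/2) ^ (2 * k * L + 1)"
  proof -
    have "(2::real) ^ (2 * k * L + 2) \<le> 2 ^ ((k + 1) * (2 * L))"
      by (rule power_increasing) (use assms(2) in \<open>auto simp: algebra_simps\<close>)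
    also have "\<dots> = real n ^ (2 * L)" by (simp add: n_def power_add flip: power_mult)
    finally have "2 / real n ^ (2 * L) \<le> 2 / 2 ^ (2 * k * L + 2)"
      by (intro divide_left_mono) (auto simp: n_def)
    then show ?thesis by (simp add: power_one_over)
  qed
  ultimately show ?thesis using approx by (meson order_trans)
qed

end
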